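(* Let $d\ge1$ and $c_0>0$. There exists $C<\infty$ (depending only on $d$ and $c_0$) such that for all $\epsilon>0$, $\theta>0$ with $\theta\epsilon^2\ge c_0$, all $t\ge0$ and all $x,y\in\mathbb R^d$, $$\big|\psi^{\epsilon,x}_t(y)-p_{\epsilon^2+t}(x,y)\big|\le\frac{C}{(\epsilon^2\theta)^{1/2}}p_{6(\epsilon^2+t)}(x,y)+\frac{C}{(\epsilon^2+t)^{d/2}}\exp(-\epsilon^2\theta/2).$$
   Context: $p_t(x,y)=(2\pi t)^{-d/2}\exp(-\|x-y\|^2/(2t))$ is the heat kernel. $q_\theta(x,dy)$ is the Gaussian distribution with mean $x$ and covariance $\theta^{-1}I$, $\mathcal L^\theta f(x)=\theta\int(f(y)-f(x))q_\theta(x,dy)$, and $\psi^{\epsilon,x}_t$ is the solution of $\partial_t\psi=\mathcal L^\theta\psi$ with $\psi_0(y)=p_{\epsilon^2}(x,y)$; equivalently $\psi^{\epsilon,x}_t(y)=\mathbb E[p_{\epsilon^2+\Pi(\theta t)/\theta}(x,y)]$ for a rate one Poisson process $\Pi$. *)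

theory Defs
  imports "HOL-Analysis.Analysis"
begin

definition heat_kernel :: "real \<Rightarrow> real^'n \<Rightarrow> real^'n \<Rightarrow> real" where
  "heat_kernel t x y =
     (2 * pi * t) powr (- real CARD('n) / 2) * exp (- (norm (x - y))\<^sup>2 / (2 * t))"

text \<open>psi^{eps,x}_t(y) = E[ p_{eps^2 + Pi(theta t)/theta}(x,y) ], where Pi(theta t) is
  Poisson distributed with mean theta t; the expectation is written out as the series
  over the Poisson weights exp(-theta t) (theta t)^k / k!.\<close>
definition psi :: "real \<Rightarrow> real \<Rightarrow> real^'n \<Rightarrow> real \<Rightarrow> real^'n \<Rightarrow> real" where
  "psi \<theta> \<epsilon> x t y =
     (\<Sum>k. exp (- \<theta> * t) * (\<theta> * t) ^ k / fact k * heat_kernel (\<epsilon>\<^sup>2 + real k / \<theta>) x y)"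

end

theory Submission
  imports Defs
begin

text \<open>
  psi is the average of the Gaussian profile u \<mapsto> p_u(x, y) over the random times
  u_k = eps^2 + k / theta, where k is Poisson distributed with mean theta t; it is compared with
  p at the mean time s = eps^2 + t. On [s/10, 3s] the time derivative of p_u is at most
  C / s * p_{6s}, so there the error is at most C |k - theta t| / (theta s) * p_{6s}, and the
  mean absolute deviation of the Poisson law is at most its standard deviation
  sqrt (theta t) <= sqrt (theta s). Times outside [s/10, 3s] are rare: bounding their indicators
  by exp (2 theta (s/10 - u)) and exp (theta (u - 3s)) turns their contribution into exponential
  moments of the Poisson law, which are of order exp (- eps^2 theta / 2); the hypothesis
  theta eps^2 >= c0 controls the prefactor (2 pi eps^2)^(-d/2) by a multiple of s^(-d/2).
\<close>

lemma mult_exp_minus_le_one: "(y :: real) * exp (- y) \<le> 1"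
proof -
  have "y \<le> exp y" using exp_ge_add_one_self[of y] by linarith
  then have "y * exp (- y) \<le> exp y * exp (- y)" by (rule mult_right_mono) simp
  then show ?thesis by (simp add: exp_minus)
qed

lemma powr_mult_exp_minus_divide_le:
  fixes x p c :: real
  assumes "x \<ge> 0" "p > 0" "c > 0"
  shows "x powr p * exp (- x / c) \<le> (c * p) powr p"
proof -
  have "x * exp (- x / (c * p)) = c * p * (x / (c * p) * exp (- (x / (c * p))))"
    using assms by simp
  also have "\<dots> \<le> c * p"
    using mult_exp_minus_le_one[of "x / (c * p)"] assms by (simp add: mult_left_le)
  finally have "(x * exp (- x / (c * p))) powr p \<le> (c * p) powr p"
    using assms by (intro powr_mono2) auto
  moreover have "(x * exp (- x / (c * p))) powr p = x powr p * exp (- x / c)"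
    using assms by (simp add: powr_mult exp_powr_real)
  ultimately show ?thesis by simp
qed

lemma exp_minus_two_le: "exp (- 2 :: real) \<le> 1 / 5"
proof -
  have "5 \<le> exp (2 :: real)"
    using exp_lower_Taylor_quadratic[of 2] by simp
  then show ?thesis by (simp add: exp_minus field_simps)
qed

lemma abs_le_square_divide_add:
  fixes x \<delta> :: real
  assumes "\<delta> > 0"
  shows "\<bar>x\<bar> \<le> x\<^sup>2 / (2 * \<delta>) + \<delta> / 2"
proof -
  have "0 \<le> (\<bar>x\<bar> - \<delta>)\<^sup>2" by simp
  then show ?thesis using assms by (simp add: field_simps power2_eq_square)
qed

lemma powr_minus_divide_eq:
  fixes x c e :: real
  assumes "x > 0" "c > 0"
  shows "(x / c) powr (- e) = c powr e * x powr (- e)"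
  using assms by (simp add: powr_divide powr_minus field_simps)

lemma suminf_weighted_deviation_le:
  fixes w f g :: "nat \<Rightarrow> real"
  assumes "w sums 1" "\<And>k. w k \<ge> 0" "\<And>k. \<bar>f k - c\<bar> \<le> g k" "summable (\<lambda>k. w k * g k)"
  shows "\<bar>(\<Sum>k. w k * f k) - c\<bar> \<le> (\<Sum>k. w k * g k)"
proof -
  define h where "h k = w k * (f k - c)" for k
  have h_le: "\<bar>h k\<bar> \<le> w k * g k" for k
    using mult_left_mono[OF assms(3) assms(2)] assms(2) by (simp add: h_def abs_mult)
  have "summable (\<lambda>k. \<bar>h k\<bar>)"
    using assms(4) by (rule summable_comparison_test'[where N = 0]) (simp add: h_le)
  then have "(\<lambda>k. h k + c * w k) sums ((\<Sum>k. h k) + c * 1)"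
    by (intro sums_add summable_sums[OF summable_rabs_cancel] sums_mult[OF assms(1)])
  then have "(\<Sum>k. w k * f k) - c = (\<Sum>k. h k)"
    by (simp add: h_def algebra_simps sums_iff)
  also have "\<bar>\<dots>\<bar> \<le> (\<Sum>k. \<bar>h k\<bar>)"
    by (rule summable_rabs) fact
  also have "\<dots> \<le> (\<Sum>k. w k * g k)"
    by (rule suminf_le[OF h_le]) fact+
  finally show ?thesis .
qed

section \<open>Time regularity of the heat kernel\<close>

definition gauss_profile :: "real \<Rightarrow> real \<Rightarrow> real \<Rightarrow> real" where
  "gauss_profile d r u = (2 * pi * u) powr (- d / 2) * exp (- r / (2 * u))"

lemma heat_kernel_eq_gauss_profile:
  "heat_kernel u x (y :: real^'n) = gauss_profile (real CARD('n)) ((norm (x - y))\<^sup>2) u"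
  by (simp add: heat_kernel_def gauss_profile_def)

lemma gauss_profile_nonneg: "gauss_profile d r u \<ge> 0"
  by (simp add: gauss_profile_def)

lemma gauss_profile_le_powr:
  assumes "r \<ge> 0" "u > 0"
  shows "gauss_profile d r u \<le> (2 * pi * u) powr (- d / 2)"
  using assms by (auto simp: gauss_profile_def intro!: mult_left_le)

lemma gauss_profile_has_real_derivative:
  assumes "u > 0"
  shows "(gauss_profile d r has_real_derivative
           gauss_profile d r u * (r / (2 * u\<^sup>2) - d / (2 * u))) (at u)"
proof -
  have "(2 * pi * u) powr (- d / 2 - 1) = (2 * pi * u) powr (- d / 2) / (2 * pi * u)"
    using assms by (simp add: powr_diff)
  then show ?thesis
    unfolding gauss_profile_def[abs_def] using assms
    by (auto intro!: derivative_eq_intros simp: power2_eq_square field_simps)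
qed

definition gauss_lip_const :: "real \<Rightarrow> real" where
  "gauss_lip_const d = 10 * 60 powr (d / 2) * (d / 2 + 2)"

lemma gauss_lip_const_nonneg: "d \<ge> 0 \<Longrightarrow> gauss_lip_const d \<ge> 0"
  by (simp add: gauss_lip_const_def)

lemma gauss_profile_deriv_bound:
  assumes d: "d \<ge> 0" and r: "r \<ge> 0" and s: "s > 0" and v: "s / 10 \<le> v" "v \<le> 3 * s"
  shows "\<bar>gauss_profile d r v * (r / (2 * v\<^sup>2) - d / (2 * v))\<bar>
           \<le> gauss_lip_const d / s * gauss_profile d r (6 * s)"
proof -
  have "v > 0" using s v by linarith
  define P where "P = (2 * pi * v) powr (- d / 2)"
  have "P \<ge> 0" by (simp add: P_def)
  \<comment> \<open>halving the Gaussian exponent absorbs the polynomial factor r / v\<close>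
  have "r / (2 * v) * exp (- r / (2 * v))
      = 2 * (r / (4 * v) * exp (- r / (4 * v))) * exp (- r / (4 * v))"
    by (simp add: mult_exp_exp)
  also have "\<dots> \<le> 2 * exp (- r / (4 * v))"
    using mult_exp_minus_le_one[of "r / (4 * v)"] by (intro mult_right_mono) auto
  finally have absorb: "r / (2 * v) * exp (- r / (2 * v)) \<le> 2 * exp (- r / (4 * v))" .
  have "\<bar>gauss_profile d r v * (r / (2 * v\<^sup>2) - d / (2 * v))\<bar>
      \<le> P * exp (- r / (2 * v)) * (r / (2 * v\<^sup>2) + d / (2 * v))"
    using r d \<open>v > 0\<close>
    by (auto simp: gauss_profile_def P_def abs_mult
        intro!: mult_left_mono order.trans[OF abs_triangle_ineq4])
  also have "\<dots> = P / v * (r / (2 * v) * exp (- r / (2 * v)) + d / 2 * exp (- r / (2 * v)))"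
    using \<open>v > 0\<close> by (simp add: field_simps power2_eq_square)
  also have "\<dots> \<le> P / v * ((d / 2 + 2) * exp (- r / (12 * s)))"
  proof -
    have "exp (- r / (2 * v)) \<le> exp (- r / (4 * v))"
      and e3: "exp (- r / (4 * v)) \<le> exp (- r / (12 * s))"
      using r s v \<open>v > 0\<close> by (simp_all add: field_simps mult_left_mono)
    then have "r / (2 * v) * exp (- r / (2 * v)) + d / 2 * exp (- r / (2 * v))
        \<le> 2 * exp (- r / (12 * s)) + d / 2 * exp (- r / (12 * s))"
      using order.trans[OF absorb mult_left_mono[OF e3]] d by (intro add_mono mult_left_mono) auto
    then show ?thesis
      using \<open>P \<ge> 0\<close> \<open>v > 0\<close> by (intro mult_left_mono) (auto simp: algebra_simps)
  qed
  also have "\<dots> \<le> 60 powr (d / 2) * (12 * pi * s) powr (- d / 2) * (10 / s)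
      * ((d / 2 + 2) * exp (- r / (12 * s)))"
  proof -
    have "P \<le> (12 * pi * s / 60) powr (- d / 2)"
      unfolding P_def using s v d by (intro powr_mono2') auto
    also have "\<dots> = 60 powr (d / 2) * (12 * pi * s) powr (- d / 2)"
      using powr_minus_divide_eq[of "12 * pi * s" 60 "d / 2"] s by simp
    finally have "P \<le> 60 powr (d / 2) * (12 * pi * s) powr (- d / 2)" .
    moreover have "1 / v \<le> 10 / s"
      using s v \<open>v > 0\<close> by (simp add: field_simps)
    ultimately have "P * (1 / v) \<le> 60 powr (d / 2) * (12 * pi * s) powr (- d / 2) * (10 / s)"
      using \<open>P \<ge> 0\<close> \<open>v > 0\<close> by (intro mult_mono) auto
    then show ?thesis using d by (intro mult_right_mono) auto
  qed
  also have "\<dots> = gauss_lip_const d / s * gauss_profile d r (6 * s)"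
    by (simp add: gauss_lip_const_def gauss_profile_def field_simps)
  finally show ?thesis .
qed

lemma gauss_profile_lipschitz:
  assumes "d \<ge> 0" "r \<ge> 0" "s > 0" "s / 10 \<le> u" "u \<le> 3 * s"
  shows "\<bar>gauss_profile d r u - gauss_profile d r s\<bar>
           \<le> gauss_lip_const d * \<bar>u - s\<bar> / s * gauss_profile d r (6 * s)"
proof -
  have "norm (gauss_profile d r u - gauss_profile d r s)
      \<le> gauss_lip_const d / s * gauss_profile d r (6 * s) * norm (u - s)"
  proof (rule field_differentiable_bound[where S = "{s / 10 .. 3 * s}"])
    fix v assume "v \<in> {s / 10 .. 3 * s}"
    show "(gauss_profile d r has_field_derivative
        gauss_profile d r v * (r / (2 * v\<^sup>2) - d / (2 * v))) (at v within {s / 10 .. 3 * s})"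
      using \<open>v \<in> _\<close> assms
      by (intro has_field_derivative_at_within[OF gauss_profile_has_real_derivative]) auto
    show "norm (gauss_profile d r v * (r / (2 * v\<^sup>2) - d / (2 * v)))
        \<le> gauss_lip_const d / s * gauss_profile d r (6 * s)"
      unfolding real_norm_def using \<open>v \<in> _\<close> assms by (intro gauss_profile_deriv_bound) auto
  qed (use assms in auto)
  then show ?thesis by (simp add: mult_ac)
qed

lemma gauss_profile_le_dilate:
  assumes "r \<ge> 0" "s > 0"
  shows "gauss_profile d r s \<le> 6 powr (d / 2) * gauss_profile d r (6 * s)"
proof -
  have "(2 * pi * s) powr (- d / 2) = (12 * pi * s / 6) powr (- (d / 2))"
    by (simp add: mult.assoc)
  also have "\<dots> = 6 powr (d / 2) * (12 * pi * s) powr (- d / 2)"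
    using powr_minus_divide_eq[of "12 * pi * s" 6 "d / 2"] assms by simp
  finally have "(2 * pi * s) powr (- d / 2) = 6 powr (d / 2) * (12 * pi * s) powr (- d / 2)" .
  moreover have "exp (- r / (2 * s)) \<le> exp (- r / (12 * s))"
    using assms by (simp add: field_simps)
  ultimately show ?thesis
    by (simp add: gauss_profile_def mult.assoc mult_left_mono)
qed

lemma gauss_profile_le_far:
  assumes d: "d \<ge> 0" and r: "r \<ge> 0" and s: "s > 0" and far: "\<bar>u - s\<bar> \<ge> s / 2"
  shows "gauss_profile d r s \<le> gauss_lip_const d * \<bar>u - s\<bar> / s * gauss_profile d r (6 * s)"
proof -
  have "1 * 60 powr (d / 2) \<le> (5 * (d / 2 + 2)) * 60 powr (d / 2)"
    using d by (intro mult_right_mono) auto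
  moreover have "6 powr (d / 2) \<le> 60 powr (d / 2)"
    using d by (intro powr_mono2) auto
  ultimately have "6 powr (d / 2) \<le> gauss_lip_const d * (1 / 2)"
    unfolding gauss_lip_const_def by (simp add: algebra_simps)
  also have "\<dots> \<le> gauss_lip_const d * (\<bar>u - s\<bar> / s)"
    using far s gauss_lip_const_nonneg[OF d] by (intro mult_left_mono) (auto simp: field_simps)
  finally have "6 powr (d / 2) * gauss_profile d r (6 * s)
      \<le> gauss_lip_const d * \<bar>u - s\<bar> / s * gauss_profile d r (6 * s)"
    using gauss_profile_nonneg by (intro mult_right_mono) auto
  then show ?thesis
    using gauss_profile_le_dilate[OF r s] by (rule order.trans[rotated])
qed

text \<open>
  The exponential factors are at least 1 where u < s/10 resp. u > 3s, so they dominate the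
  indicators of these regions; for u = a + k / theta they become exponential moments of k.
\<close>

lemma gauss_profile_diff_le:
  assumes d: "d \<ge> 0" and r: "r \<ge> 0" and a: "a > 0" "a \<le> s" "a \<le> u" and \<theta>: "\<theta> > 0"
  shows "\<bar>gauss_profile d r u - gauss_profile d r s\<bar>
           \<le> gauss_lip_const d * \<bar>u - s\<bar> / s * gauss_profile d r (6 * s)
             + (2 * pi * a) powr (- d / 2) * exp (2 * \<theta> * (s / 10 - u))
             + (6 * pi * s) powr (- d / 2) * exp (\<theta> * (u - 3 * s))"
    (is "_ \<le> ?lip + ?small + ?large")
proof -
  have "s > 0" "u > 0" using a by linarith+
  have "?small \<ge> 0" "?large \<ge> 0" by simp_all
  have far: "gauss_profile d r s \<le> ?lip" if "\<bar>u - s\<bar> \<ge> s / 2"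
    using gauss_profile_le_far[OF d r \<open>s > 0\<close> that] .
  have triangle:
    "\<bar>gauss_profile d r u - gauss_profile d r s\<bar> \<le> gauss_profile d r u + gauss_profile d r s"
    using gauss_profile_nonneg[of d r u] gauss_profile_nonneg[of d r s] by linarith
  consider "u < s / 10" | "s / 10 \<le> u" "u \<le> 3 * s" | "3 * s < u" by linarith
  then show ?thesis
  proof cases
    case 1
    have "gauss_profile d r u \<le> (2 * pi * a) powr (- d / 2)"
      using gauss_profile_le_powr[OF r \<open>u > 0\<close>, of d]
        powr_mono2'[of "- d / 2" "2 * pi * a" "2 * pi * u"] a d
      by simp
    also have "\<dots> \<le> ?small"
      using 1 \<theta> by (simp add: mult_le_cancel_left1)
    finally show ?thesis using far triangle 1 \<open>?large \<ge> 0\<close> by linarith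
  next
    case 2
    show ?thesis
      using gauss_profile_lipschitz[OF d r \<open>s > 0\<close> 2] \<open>?small \<ge> 0\<close> \<open>?large \<ge> 0\<close> by linarith
  next
    case 3
    have "gauss_profile d r u \<le> (6 * pi * s) powr (- d / 2)"
      using gauss_profile_le_powr[OF r \<open>u > 0\<close>, of d]
        powr_mono2'[of "- d / 2" "6 * pi * s" "2 * pi * u"] 3 \<open>s > 0\<close> d
      by simp
    also have "\<dots> \<le> ?large"
      using 3 \<theta> by (simp add: mult_le_cancel_left1)
    finally show ?thesis using far triangle 3 \<open>?small \<ge> 0\<close> by linarith
  qed
qed

section \<open>Moments of the Poisson distribution\<close>

definition poisson_weight :: "real \<Rightarrow> nat \<Rightarrow> real" where
  "poisson_weight \<mu> k = exp (- \<mu>) * \<mu> ^ k / fact k"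

lemma poisson_weight_nonneg: "\<mu> \<ge> 0 \<Longrightarrow> poisson_weight \<mu> k \<ge> 0"
  by (simp add: poisson_weight_def)

lemma poisson_weight_Suc: "real (Suc k) * poisson_weight \<mu> (Suc k) = \<mu> * poisson_weight \<mu> k"
  by (simp add: poisson_weight_def fact_Suc field_simps del: of_nat_Suc)

lemma sums_poisson_weight_exp:
  "(\<lambda>k. poisson_weight \<mu> k * exp (b * real k)) sums exp (\<mu> * (exp b - 1))"
proof -
  have "poisson_weight \<mu> k * exp (b * real k) = exp (- \<mu>) * ((\<mu> * exp b) ^ k / fact k)" for k
    by (simp add: poisson_weight_def power_mult_distrib exp_of_nat2_mult)
  moreover have "exp (- \<mu>) * exp (\<mu> * exp b) = exp (\<mu> * (exp b - 1))"
    by (simp add: right_diff_distrib flip: exp_add)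
  moreover have "(\<lambda>k. exp (- \<mu>) * ((\<mu> * exp b) ^ k / fact k)) sums (exp (- \<mu>) * exp (\<mu> * exp b))"
    using exp_converges[of "\<mu> * exp b"] by (intro sums_mult) (simp add: divide_inverse mult.commute)
  ultimately show ?thesis by simp
qed

lemma sums_poisson_weight: "poisson_weight \<mu> sums 1"
  using sums_poisson_weight_exp[of \<mu> 0] by simp

lemma sums_poisson_weight_mean: "(\<lambda>k. poisson_weight \<mu> k * real k) sums \<mu>"
proof -
  have "(\<lambda>k. poisson_weight \<mu> (Suc k) * real (Suc k)) sums (\<mu> * 1)"
    using sums_mult[OF sums_poisson_weight, of \<mu>] poisson_weight_Suc by (simp add: mult.commute)
  then show ?thesis
    using sums_Suc_iff[of "\<lambda>k. poisson_weight \<mu> k * real k" \<mu>] by simp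
qed

lemma sums_poisson_weight_second_moment:
  "(\<lambda>k. poisson_weight \<mu> k * (real k)\<^sup>2) sums (\<mu>\<^sup>2 + \<mu>)"
proof -
  have "(\<lambda>k. \<mu> * (poisson_weight \<mu> k * real k + poisson_weight \<mu> k)) sums (\<mu> * (\<mu> + 1))"
    by (intro sums_mult sums_add sums_poisson_weight_mean sums_poisson_weight)
  moreover have "poisson_weight \<mu> (Suc k) * (real (Suc k))\<^sup>2
      = \<mu> * (poisson_weight \<mu> k * real k + poisson_weight \<mu> k)" for k
  proof -
    have "poisson_weight \<mu> (Suc k) * (real (Suc k))\<^sup>2
        = real (Suc k) * (real (Suc k) * poisson_weight \<mu> (Suc k))"
      by (simp add: power2_eq_square)
    also have "\<dots> = real (Suc k) * (\<mu> * poisson_weight \<mu> k)"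
      by (simp only: poisson_weight_Suc)
    finally show ?thesis by (simp add: algebra_simps)
  qed
  ultimately have "(\<lambda>k. poisson_weight \<mu> (Suc k) * (real (Suc k))\<^sup>2) sums (\<mu>\<^sup>2 + \<mu>)"
    by (simp add: power2_eq_square algebra_simps)
  then show ?thesis
    using sums_Suc_iff[of "\<lambda>k. poisson_weight \<mu> k * (real k)\<^sup>2" "\<mu>\<^sup>2 + \<mu>"] by simp
qed

lemma sums_poisson_weight_variance: "(\<lambda>k. poisson_weight \<mu> k * (real k - \<mu>)\<^sup>2) sums \<mu>"
proof -
  have "(\<lambda>k. poisson_weight \<mu> k * (real k)\<^sup>2 - 2 * \<mu> * (poisson_weight \<mu> k * real k)
      + \<mu>\<^sup>2 * poisson_weight \<mu> k) sums (\<mu>\<^sup>2 + \<mu> - 2 * \<mu> * \<mu> + \<mu>\<^sup>2 * 1)"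
    by (intro sums_add sums_diff sums_mult sums_poisson_weight_second_moment
        sums_poisson_weight_mean sums_poisson_weight)
  then show ?thesis by (simp add: power2_eq_square algebra_simps)
qed

lemma poisson_mean_abs_deviation:
  assumes "\<mu> \<ge> 0"
  shows "summable (\<lambda>k. poisson_weight \<mu> k * \<bar>real k - \<mu>\<bar>)"
    and "(\<Sum>k. poisson_weight \<mu> k * \<bar>real k - \<mu>\<bar>) \<le> sqrt \<mu>"
proof -
  have "summable (\<lambda>k. poisson_weight \<mu> k * \<bar>real k - \<mu>\<bar>) \<and>
      (\<Sum>k. poisson_weight \<mu> k * \<bar>real k - \<mu>\<bar>) \<le> sqrt \<mu>"
  proof (cases "\<mu> = 0")
    case True
    then have "(\<lambda>k. poisson_weight \<mu> k * \<bar>real k - \<mu>\<bar>) = (\<lambda>k. 0)"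
      by (auto simp: poisson_weight_def power_0_left)
    then show ?thesis using assms by simp
  next
    case False
    define \<delta> where "\<delta> = sqrt \<mu>"
    have "\<delta> > 0" "\<delta>\<^sup>2 = \<mu>" using assms False by (simp_all add: \<delta>_def)
    define g where
      "g k = poisson_weight \<mu> k * (real k - \<mu>)\<^sup>2 / (2 * \<delta>) + \<delta> / 2 * poisson_weight \<mu> k" for k
    have g: "g sums \<delta>"
    proof -
      have "g sums (\<mu> / (2 * \<delta>) + \<delta> / 2 * 1)"
        unfolding g_def[abs_def]
        by (rule sums_add[OF sums_divide[OF sums_poisson_weight_variance]
              sums_mult[OF sums_poisson_weight]])
      then show ?thesis
        using \<open>\<delta> > 0\<close> unfolding \<open>\<delta>\<^sup>2 = \<mu>\<close>[symmetric] by (simp add: power2_eq_square)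
    qed
    have le: "poisson_weight \<mu> k * \<bar>real k - \<mu>\<bar> \<le> g k" for k
      using mult_left_mono[OF abs_le_square_divide_add[OF \<open>\<delta> > 0\<close>, of "real k - \<mu>"]
          poisson_weight_nonneg[OF assms]]
      by (simp add: g_def algebra_simps)
    have "summable (\<lambda>k. poisson_weight \<mu> k * \<bar>real k - \<mu>\<bar>)"
      using sums_summable[OF g] by (rule summable_comparison_test'[where N = 0])
        (use le poisson_weight_nonneg[OF assms] in simp)
    moreover have "(\<Sum>k. poisson_weight \<mu> k * \<bar>real k - \<mu>\<bar>) \<le> \<delta>"
      using suminf_le[OF le calculation sums_summable[OF g]] g by (simp add: sums_iff)
    ultimately show ?thesis by (simp add: \<delta>_def)
  qed
  then show "summable (\<lambda>k. poisson_weight \<mu> k * \<bar>real k - \<mu>\<bar>)"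
    and "(\<Sum>k. poisson_weight \<mu> k * \<bar>real k - \<mu>\<bar>) \<le> sqrt \<mu>" by blast+
qed

section \<open>Averaging the heat kernel over Poisson times\<close>

lemma poisson_small_time_tail:
  fixes d a t \<theta> c0 :: real
  assumes d: "d > 0" and a: "a > 0" and t: "t \<ge> 0" and \<theta>: "\<theta> > 0"
    and c0: "c0 > 0" "c0 \<le> \<theta> * a"
  shows "(2 * pi * a) powr (- d / 2) * exp (2 * \<theta> * ((a + t) / 10 - a))
             * exp (\<theta> * t * (exp (- 2) - 1))
           \<le> c0 powr (- d / 2) * (5 * d) powr (d / 2) * (a + t) powr (- d / 2) * exp (- a * \<theta> / 2)"
proof -
  define s where "s = a + t"
  have "s > 0" using a t by (simp add: s_def)
  have "\<theta> * t * exp (- 2) \<le> \<theta> * t * (1 / 5)"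
    using exp_minus_two_le \<theta> t by (intro mult_left_mono) auto
  moreover have "2 * \<theta> * (s / 10 - a) + \<theta> * t * (exp (- 2) - 1)
      = \<theta> * a / 5 - 2 * (\<theta> * a) + \<theta> * t / 5 - \<theta> * t + \<theta> * t * exp (- 2)"
    "\<theta> * s / 10 = \<theta> * a / 10 + \<theta> * t / 10" "- a * \<theta> / 2 = - (\<theta> * a) / 2"
    by (simp_all add: s_def algebra_simps)
  moreover have "\<theta> * a > 0" "\<theta> * t \<ge> 0" using \<theta> a t by simp_all
  ultimately have "2 * \<theta> * (s / 10 - a) + \<theta> * t * (exp (- 2) - 1) \<le> - (\<theta> * s / 10) + - a * \<theta> / 2"
    by linarith
  then have expo: "exp (2 * \<theta> * (s / 10 - a)) * exp (\<theta> * t * (exp (- 2) - 1))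
      \<le> exp (- (\<theta> * s / 10)) * exp (- a * \<theta> / 2)"
    by (simp flip: exp_add)
  have "(2 * pi * a) powr (- d / 2) \<le> a powr (- d / 2)"
    using a d pi_gt3 by (intro powr_mono2') auto
  also have "\<dots> = \<theta> powr (d / 2) * (\<theta> * a) powr (- d / 2)"
    using a \<theta> by (simp add: powr_mult powr_minus field_simps)
  also have "\<dots> \<le> \<theta> powr (d / 2) * c0 powr (- d / 2)"
    using c0 d by (intro mult_left_mono powr_mono2') auto
  also have "\<dots> = c0 powr (- d / 2) * s powr (- d / 2) * (\<theta> * s) powr (d / 2)"
    using \<open>s > 0\<close> \<theta> by (simp add: powr_mult powr_minus field_simps)
  finally have pre:
    "(2 * pi * a) powr (- d / 2) \<le> c0 powr (- d / 2) * s powr (- d / 2) * (\<theta> * s) powr (d / 2)" .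
  have peak: "(\<theta> * s) powr (d / 2) * exp (- (\<theta> * s / 10)) \<le> (5 * d) powr (d / 2)"
    using powr_mult_exp_minus_divide_le[of "\<theta> * s" "d / 2" 10] \<open>s > 0\<close> \<theta> d by simp
  have "(2 * pi * a) powr (- d / 2) * exp (2 * \<theta> * (s / 10 - a)) * exp (\<theta> * t * (exp (- 2) - 1))
      \<le> c0 powr (- d / 2) * s powr (- d / 2) * (\<theta> * s) powr (d / 2)
          * (exp (- (\<theta> * s / 10)) * exp (- a * \<theta> / 2))"
    unfolding mult.assoc[of "(2 * pi * a) powr (- d / 2)"] by (rule mult_mono[OF pre expo]) auto
  also have "\<dots> = c0 powr (- d / 2) * s powr (- d / 2)
      * ((\<theta> * s) powr (d / 2) * exp (- (\<theta> * s / 10))) * exp (- a * \<theta> / 2)"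
    by (simp only: mult_ac)
  also have "\<dots> \<le> c0 powr (- d / 2) * s powr (- d / 2) * (5 * d) powr (d / 2) * exp (- a * \<theta> / 2)"
    using peak by (intro mult_right_mono mult_left_mono) auto
  finally show ?thesis by (simp add: s_def mult_ac)
qed

lemma poisson_large_time_tail:
  fixes d a t \<theta> :: real
  assumes d: "d \<ge> 0" and a: "a > 0" and t: "t \<ge> 0" and \<theta>: "\<theta> > 0"
  shows "(6 * pi * (a + t)) powr (- d / 2) * exp (\<theta> * (a - 3 * (a + t))) * exp (\<theta> * t * (exp 1 - 1))
           \<le> (a + t) powr (- d / 2) * exp (- a * \<theta> / 2)"
proof -
  have "\<theta> * t * exp 1 \<le> \<theta> * t * 3"
    using exp_le \<theta> t by (intro mult_left_mono) auto
  moreover have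
    "\<theta> * (a - 3 * (a + t)) + \<theta> * t * (exp 1 - 1) = - 2 * (\<theta> * a) - 4 * (\<theta> * t) + \<theta> * t * exp 1"
    "- a * \<theta> / 2 = - (\<theta> * a) / 2"
    by (simp_all add: algebra_simps)
  moreover have "\<theta> * a > 0" "\<theta> * t \<ge> 0" using \<theta> a t by simp_all
  ultimately have "\<theta> * (a - 3 * (a + t)) + \<theta> * t * (exp 1 - 1) \<le> - a * \<theta> / 2"
    by linarith
  then have "exp (\<theta> * (a - 3 * (a + t))) * exp (\<theta> * t * (exp 1 - 1)) \<le> exp (- a * \<theta> / 2)"
    by (simp flip: exp_add)
  moreover have "(6 * pi * (a + t)) powr (- d / 2) \<le> (a + t) powr (- d / 2)"
    using a t d pi_gt3 by (intro powr_mono2') auto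
  ultimately show ?thesis
    by (simp add: mult.assoc mult_mono)
qed

lemma poisson_average_gauss_profile_deviation:
  fixes d r a t \<theta> :: real
  assumes d: "d \<ge> 0" and r: "r \<ge> 0" and a: "a > 0" and t: "t \<ge> 0" and \<theta>: "\<theta> > 0"
  defines "s \<equiv> a + t"
  shows "\<bar>(\<Sum>k. poisson_weight (\<theta> * t) k * gauss_profile d r (a + real k / \<theta>)) - gauss_profile d r s\<bar>
           \<le> gauss_lip_const d / sqrt (\<theta> * s) * gauss_profile d r (6 * s)
             + (2 * pi * a) powr (- d / 2) * exp (2 * \<theta> * (s / 10 - a))
                 * exp (\<theta> * t * (exp (- 2) - 1))
             + (6 * pi * s) powr (- d / 2) * exp (\<theta> * (a - 3 * s)) * exp (\<theta> * t * (exp 1 - 1))"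
proof -
  define \<mu> where "\<mu> = \<theta> * t"
  define \<alpha> where "\<alpha> = gauss_lip_const d * gauss_profile d r (6 * s) / (\<theta> * s)"
  define A where "A = (2 * pi * a) powr (- d / 2) * exp (2 * \<theta> * (s / 10 - a))"
  define B where "B = (6 * pi * s) powr (- d / 2) * exp (\<theta> * (a - 3 * s))"
  define g where "g k = \<alpha> * \<bar>real k - \<mu>\<bar> + A * exp (- 2 * real k) + B * exp (1 * real k)" for k
  have "s > 0" "a \<le> s" "\<mu> \<ge> 0" using a t \<theta> by (simp_all add: s_def \<mu>_def)
  have "\<alpha> \<ge> 0"
    using gauss_lip_const_nonneg[OF d] gauss_profile_nonneg \<open>s > 0\<close> \<theta> by (simp add: \<alpha>_def)
  have pointwise: "\<bar>gauss_profile d r (a + real k / \<theta>) - gauss_profile d r s\<bar> \<le> g k" for k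
  proof -
    define u where "u = a + real k / \<theta>"
    have "u - s = (real k - \<mu>) / \<theta>"
      using \<theta> by (simp add: u_def s_def \<mu>_def field_simps)
    then have lip: "gauss_lip_const d * \<bar>u - s\<bar> / s * gauss_profile d r (6 * s) = \<alpha> * \<bar>real k - \<mu>\<bar>"
      using \<theta> by (simp add: \<alpha>_def abs_divide)
    have "2 * \<theta> * (s / 10 - u) = 2 * \<theta> * (s / 10 - a) + - 2 * real k"
      "\<theta> * (u - 3 * s) = \<theta> * (a - 3 * s) + 1 * real k"
      using \<theta> by (simp_all add: u_def field_simps)
    then have small:
        "(2 * pi * a) powr (- d / 2) * exp (2 * \<theta> * (s / 10 - u)) = A * exp (- 2 * real k)"
      and large: "(6 * pi * s) powr (- d / 2) * exp (\<theta> * (u - 3 * s)) = B * exp (1 * real k)"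
      by (simp_all only: A_def B_def exp_add mult.assoc)
    have "a \<le> u" using \<theta> by (simp add: u_def)
    from gauss_profile_diff_le[OF d r a \<open>a \<le> s\<close> this \<theta>]
    show ?thesis unfolding lip small large g_def u_def[symmetric] .
  qed
  have abs_dev: "summable (\<lambda>k. poisson_weight \<mu> k * \<bar>real k - \<mu>\<bar>)"
    "(\<Sum>k. poisson_weight \<mu> k * \<bar>real k - \<mu>\<bar>) \<le> sqrt \<mu>"
    using poisson_mean_abs_deviation[OF \<open>\<mu> \<ge> 0\<close>] by blast+
  have g_sums: "(\<lambda>k. poisson_weight \<mu> k * g k) sums
      (\<alpha> * (\<Sum>k. poisson_weight \<mu> k * \<bar>real k - \<mu>\<bar>)
        + A * exp (\<mu> * (exp (- 2) - 1)) + B * exp (\<mu> * (exp 1 - 1)))"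
  proof -
    have "poisson_weight \<mu> k * g k = \<alpha> * (poisson_weight \<mu> k * \<bar>real k - \<mu>\<bar>)
        + A * (poisson_weight \<mu> k * exp (- 2 * real k))
        + B * (poisson_weight \<mu> k * exp (1 * real k))" for k
      by (simp add: g_def algebra_simps)
    then show ?thesis
      by (simp only:) (intro sums_add sums_mult summable_sums abs_dev(1) sums_poisson_weight_exp)
  qed
  have "\<bar>(\<Sum>k. poisson_weight \<mu> k * gauss_profile d r (a + real k / \<theta>)) - gauss_profile d r s\<bar>
      \<le> (\<Sum>k. poisson_weight \<mu> k * g k)"
    using pointwise poisson_weight_nonneg[OF \<open>\<mu> \<ge> 0\<close>] sums_summable[OF g_sums]
    by (intro suminf_weighted_deviation_le sums_poisson_weight)
  also have "\<dots> \<le> \<alpha> * sqrt (\<theta> * s) + A * exp (\<mu> * (exp (- 2) - 1)) + B * exp (\<mu> * (exp 1 - 1))"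
  proof -
    have "sqrt \<mu> \<le> sqrt (\<theta> * s)"
      using a \<theta> by (simp add: \<mu>_def s_def algebra_simps)
    then have "\<alpha> * (\<Sum>k. poisson_weight \<mu> k * \<bar>real k - \<mu>\<bar>) \<le> \<alpha> * sqrt (\<theta> * s)"
      using order.trans[OF abs_dev(2)] \<open>\<alpha> \<ge> 0\<close> by (intro mult_left_mono) auto
    then show ?thesis
      using g_sums by (simp add: sums_iff)
  qed
  also have "\<alpha> * sqrt (\<theta> * s) = gauss_lip_const d / sqrt (\<theta> * s) * gauss_profile d r (6 * s)"
    using \<open>s > 0\<close> \<theta> by (simp add: \<alpha>_def field_simps real_sqrt_mult)
  finally show ?thesis
    by (simp add: \<mu>_def A_def B_def mult.assoc)
qed

definition heat_error_const :: "real \<Rightarrow> real \<Rightarrow> real" where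
  "heat_error_const d c0 = gauss_lip_const d + c0 powr (- d / 2) * (5 * d) powr (d / 2) + 1"

lemma poisson_average_gauss_profile_error:
  fixes d r a t \<theta> c0 :: real
  assumes d: "d > 0" and r: "r \<ge> 0" and a: "a > 0" and t: "t \<ge> 0" and \<theta>: "\<theta> > 0"
    and c0: "c0 > 0" "c0 \<le> \<theta> * a"
  defines "C \<equiv> heat_error_const d c0"
  shows "\<bar>(\<Sum>k. poisson_weight (\<theta> * t) k * gauss_profile d r (a + real k / \<theta>))
             - gauss_profile d r (a + t)\<bar>
           \<le> C / sqrt (a * \<theta>) * gauss_profile d r (6 * (a + t))
             + C / (a + t) powr (d / 2) * exp (- a * \<theta> / 2)"
proof -
  define s where "s = a + t"
  define E where "E = s powr (- d / 2) * exp (- a * \<theta> / 2)"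
  have "s > 0" "E \<ge> 0" using a t by (simp_all add: s_def E_def)
  have "0 \<le> gauss_lip_const d" "gauss_lip_const d \<le> C"
    "0 < sqrt (a * \<theta>)" "sqrt (a * \<theta>) \<le> sqrt (\<theta> * s)"
    using a t \<theta> d gauss_lip_const_nonneg[of d]
    by (simp_all add: C_def heat_error_const_def s_def algebra_simps)
  then have "gauss_lip_const d / sqrt (\<theta> * s) * gauss_profile d r (6 * s)
      \<le> C / sqrt (a * \<theta>) * gauss_profile d r (6 * s)"
    by (intro mult_right_mono gauss_profile_nonneg frac_le) auto
  moreover have "(2 * pi * a) powr (- d / 2) * exp (2 * \<theta> * (s / 10 - a))
        * exp (\<theta> * t * (exp (- 2) - 1))
      + (6 * pi * s) powr (- d / 2) * exp (\<theta> * (a - 3 * s)) * exp (\<theta> * t * (exp 1 - 1))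
      \<le> (c0 powr (- d / 2) * (5 * d) powr (d / 2) + 1) * E"
  proof -
    have "(2 * pi * a) powr (- d / 2) * exp (2 * \<theta> * (s / 10 - a)) * exp (\<theta> * t * (exp (- 2) - 1))
        \<le> c0 powr (- d / 2) * (5 * d) powr (d / 2) * E"
      using poisson_small_time_tail[OF d a t \<theta> c0] unfolding s_def E_def by (simp only: mult.assoc)
    moreover have
      "(6 * pi * s) powr (- d / 2) * exp (\<theta> * (a - 3 * s)) * exp (\<theta> * t * (exp 1 - 1)) \<le> E"
      using poisson_large_time_tail[OF less_imp_le[OF d] a t \<theta>] unfolding s_def E_def .
    ultimately show ?thesis by (simp add: distrib_right)
  qed
  moreover have
    "(c0 powr (- d / 2) * (5 * d) powr (d / 2) + 1) * E \<le> C / s powr (d / 2) * exp (- a * \<theta> / 2)"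
  proof -
    have "(c0 powr (- d / 2) * (5 * d) powr (d / 2) + 1) * E \<le> C * E"
      using \<open>E \<ge> 0\<close> gauss_lip_const_nonneg[OF less_imp_le[OF d]]
      by (intro mult_right_mono) (simp_all add: C_def heat_error_const_def)
    also have "\<dots> = C / s powr (d / 2) * exp (- a * \<theta> / 2)"
      by (simp add: E_def powr_minus_divide)
    finally show ?thesis .
  qed
  ultimately show ?thesis
    using poisson_average_gauss_profile_deviation[OF less_imp_le[OF d] r a t \<theta>]
    unfolding s_def by linarith
qed

theorem mainTheorem19:
  fixes c0 :: real
  assumes "c0 > 0"
  shows "\<exists>C::real. \<forall>(\<epsilon>::real) (\<theta>::real) (t::real) (x::real^'n) (y::real^'n).
           \<epsilon> > 0 \<longrightarrow> \<theta> > 0 \<longrightarrow> \<theta> * \<epsilon>\<^sup>2 \<ge> c0 \<longrightarrow> t \<ge> 0 \<longrightarrow>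
           \<bar>psi \<theta> \<epsilon> x t y - heat_kernel (\<epsilon>\<^sup>2 + t) x y\<bar>
             \<le> C / sqrt (\<epsilon>\<^sup>2 * \<theta>) * heat_kernel (6 * (\<epsilon>\<^sup>2 + t)) x y
               + C / (\<epsilon>\<^sup>2 + t) powr (real CARD('n) / 2) * exp (- \<epsilon>\<^sup>2 * \<theta> / 2)"
proof (intro exI allI impI)
  fix \<epsilon> \<theta> t :: real and x y :: "real^'n"
  assume "\<epsilon> > 0" "\<theta> > 0" "\<theta> * \<epsilon>\<^sup>2 \<ge> c0" "t \<ge> 0"
  define d where "d = real CARD('n)"
  define r where "r = (norm (x - y))\<^sup>2"
  have "d > 0" by (simp add: d_def)
  have "psi \<theta> \<epsilon> x t y = (\<Sum>k. poisson_weight (\<theta> * t) k * gauss_profile d r (\<epsilon>\<^sup>2 + real k / \<theta>))"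
    by (simp add: psi_def poisson_weight_def heat_kernel_eq_gauss_profile d_def r_def)
  then show "\<bar>psi \<theta> \<epsilon> x t y - heat_kernel (\<epsilon>\<^sup>2 + t) x y\<bar>
      \<le> heat_error_const (real CARD('n)) c0 / sqrt (\<epsilon>\<^sup>2 * \<theta>) * heat_kernel (6 * (\<epsilon>\<^sup>2 + t)) x y
        + heat_error_const (real CARD('n)) c0 / (\<epsilon>\<^sup>2 + t) powr (real CARD('n) / 2)
            * exp (- \<epsilon>\<^sup>2 * \<theta> / 2)"
    using poisson_average_gauss_profile_error[OF \<open>d > 0\<close>, of r "\<epsilon>\<^sup>2" t \<theta> c0] \<open>\<epsilon> > 0\<close> \<open>\<theta> > 0\<close> \<open>t \<ge> 0\<close>
      \<open>\<theta> * \<epsilon>\<^sup>2 \<ge> c0\<close> assms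
    by (simp add: heat_kernel_eq_gauss_profile d_def r_def mult.commute)
qed

end
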